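(* Let $v_1,\dots,v_{d+1}$ be the vertices of a $d$-simplex in general position. Let $1\le i\le d$, let $(\Gamma,\Delta)$ be a partition of $[d]=\{1,\dots,d\}$ with $|\Gamma|=i$, let $\delta=(\delta(1),\dots,\delta(d-i))$ be a fixed ordering of $\Delta$ and $\gamma=(\gamma(1),\dots,\gamma(i))$ a fixed ordering of $\Gamma$. Let $\tilde{\mathfrak S}_{d,\delta}$ be the set of permutations of $[d]$ whose one-line notation is $(\gamma'(1),\dots,\gamma'(i),\delta(1),\dots,\delta(d-i))$ for some ordering $\gamma'$ of $\Gamma$, and let $(\gamma,\delta)$ denote the permutation $(\gamma(1),\dots,\gamma(i),\delta(1),\dots,\delta(d-i))$. Then $$\sum_{\sigma\in\tilde{\mathfrak S}_{d,\delta}}\operatorname{sign}(\sigma)\prod_{j=1}^i\hat z(\sigma,j)=(-1)^{i(i-1)/2}\operatorname{sign}((\gamma,\delta))\det\hat X((\gamma,\delta),i).$$ In particular, $\sum_{\sigma\in\mathfrak S_d}\operatorname{sign}(\sigma)\prod_{j=1}^d\hat z(\sigma,j)=(-1)^{d(d-1)/2}\det\hat X(\mathbf 1,d)$.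
   Context: Write $v_i=(x_{i,1},\dots,x_{i,d})$ and $\hat x_{r,c}=x_{r,c}-x_{d+1,c}$. $\pi^{(j)}$ forgets the last $j$ coordinates; general position means that for every $0\le k\le d-1$ and every $(k+1)$-subset $U$ of the vertices, $\pi^{(d-k)}(\mathrm{conv}(U))$ is a $k$-simplex. For $\sigma\in\mathfrak S_d$, $1\le k\le d$: $\hat X(\sigma,k)$ is the $k\times k$ matrix with entries $\hat x_{\sigma(r),c}$ ($1\le r,c\le k$); $\hat Y(\sigma,k)$ is the $k\times k$ matrix with rows $(1,\hat x_{\sigma(r),1},\dots,\hat x_{\sigma(r),k-1})$; $\hat z(\sigma,k)=\det\hat X(\sigma,k)/\det\hat Y(\sigma,k)$. $\mathbf 1$ is the identity permutation; $\operatorname{sign}(\sigma)$ is the sign of the permutation. *)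

theory Defs
  imports "Jordan_Normal_Form.Determinant" "HOL-Combinatorics.Permutations"
begin

text \<open>Points of R^d are represented as functions nat => real whose coordinates are
  indexed by 1..d (all other coordinates are 0). The raw data is
  x r c = x_{r,c}, for vertices r in 1..d+1 and coordinates c in 1..d.\<close>

definition point :: "nat \<Rightarrow> (nat \<Rightarrow> nat \<Rightarrow> real) \<Rightarrow> nat \<Rightarrow> (nat \<Rightarrow> real)" where
  "point d x r = (\<lambda>c. if 1 \<le> c \<and> c \<le> d then x r c else 0)"

definition proj :: "nat \<Rightarrow> nat \<Rightarrow> (nat \<Rightarrow> real) \<Rightarrow> (nat \<Rightarrow> real)" where
  "proj d j p = (\<lambda>c. if c \<le> d - j then p c else 0)"

definition convhull :: "(nat \<Rightarrow> real) set \<Rightarrow> (nat \<Rightarrow> real) set" where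
  "convhull C = {y. \<exists>u. (\<forall>p\<in>C. 0 \<le> u p) \<and> (\<Sum>p\<in>C. u p) = 1 \<and>
                        y = (\<lambda>c. \<Sum>p\<in>C. u p * p c)}"

definition aff_indep :: "(nat \<Rightarrow> real) set \<Rightarrow> bool" where
  "aff_indep C \<longleftrightarrow> finite C \<and>
     (\<forall>u. (\<Sum>p\<in>C. u p) = 0 \<and> (\<lambda>c. \<Sum>p\<in>C. u p * p c) = (\<lambda>c. 0) \<longrightarrow> (\<forall>p\<in>C. u p = 0))"

definition is_simplex :: "nat \<Rightarrow> (nat \<Rightarrow> real) set \<Rightarrow> bool" where
  "is_simplex k S \<longleftrightarrow> (\<exists>C. aff_indep C \<and> card C = k + 1 \<and> S = convhull C)"

definition general_position :: "nat \<Rightarrow> (nat \<Rightarrow> nat \<Rightarrow> real) \<Rightarrow> bool" where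
  "general_position d x \<longleftrightarrow>
     (\<forall>k U. k \<le> d - 1 \<and> U \<subseteq> {1..d+1} \<and> card U = k + 1 \<longrightarrow>
        is_simplex k (proj d (d - k) ` convhull (point d x ` U)))"

definition xhat :: "nat \<Rightarrow> (nat \<Rightarrow> nat \<Rightarrow> real) \<Rightarrow> nat \<Rightarrow> nat \<Rightarrow> real" where
  "xhat d x r c = x r c - x (d + 1) c"

text \<open>Matrices are 0-indexed in Jordan_Normal_Form: entry (r,c) below is the
  paper's entry (r+1,c+1).\<close>
definition Xhat :: "nat \<Rightarrow> (nat \<Rightarrow> nat \<Rightarrow> real) \<Rightarrow> (nat \<Rightarrow> nat) \<Rightarrow> nat \<Rightarrow> real mat" where
  "Xhat d x \<sigma> k = mat k k (\<lambda>(r, c). xhat d x (\<sigma> (r + 1)) (c + 1))"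

definition Yhat :: "nat \<Rightarrow> (nat \<Rightarrow> nat \<Rightarrow> real) \<Rightarrow> (nat \<Rightarrow> nat) \<Rightarrow> nat \<Rightarrow> real mat" where
  "Yhat d x \<sigma> k = mat k k (\<lambda>(r, c). if c = 0 then 1 else xhat d x (\<sigma> (r + 1)) c)"

definition zhat :: "nat \<Rightarrow> (nat \<Rightarrow> nat \<Rightarrow> real) \<Rightarrow> (nat \<Rightarrow> nat) \<Rightarrow> nat \<Rightarrow> real" where
  "zhat d x \<sigma> k = det (Xhat d x \<sigma> k) / det (Yhat d x \<sigma> k)"

definition concat_perm :: "nat \<Rightarrow> nat \<Rightarrow> (nat \<Rightarrow> nat) \<Rightarrow> (nat \<Rightarrow> nat) \<Rightarrow> nat \<Rightarrow> nat" where
  "concat_perm d i \<gamma> \<delta> = (\<lambda>j. if 1 \<le> j \<and> j \<le> i then \<gamma> j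
                             else if i < j \<and> j \<le> d then \<delta> (j - i) else j)"

definition perms_delta :: "nat \<Rightarrow> nat \<Rightarrow> (nat \<Rightarrow> nat) \<Rightarrow> (nat \<Rightarrow> nat) set" where
  "perms_delta d i \<delta> = {\<sigma>. \<sigma> permutes {1..d} \<and> (\<forall>j. i < j \<and> j \<le> d \<longrightarrow> \<sigma> j = \<delta> (j - i))}"

end

theory Submission
  imports Defs
begin

text \<open>
  Let \<open>\<kappa>\<^sub>r\<close> move row \<open>r+1\<close> of \<open>g\<close> to the end. Expanding \<open>det (Yhat g (n+1))\<close> along its
  first column gives \<open>\<Sum>\<^sub>r (-1)^r det (Xhat (g \<circ> \<kappa>\<^sub>r) n)\<close>, and \<open>zhat g k\<close> does not change when
  the first \<open>k\<close> rows of \<open>g\<close> are permuted. By induction the signed sum over permutations of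
  \<open>[n]\<close> for \<open>g \<circ> \<kappa>\<^sub>r\<close> is \<open>\<plusminus> det (Xhat (g \<circ> \<kappa>\<^sub>r) n)\<close>; writing every permutation of \<open>[n+1]\<close>
  uniquely as \<open>\<kappa>\<^sub>r \<circ> \<rho>\<close>, the sum for \<open>[n+1]\<close> therefore collapses to
  \<open>\<plusminus> zhat g (n+1) det (Yhat g (n+1)) = \<plusminus> det (Xhat g (n+1))\<close>.
  General position is used only to make every \<open>Yhat\<close> nonsingular: otherwise the vertices of a
  projected face, being affine combinations of its rows, would be affinely dependent.
  The sum over \<open>perms_delta\<close> is the same sum over the coset \<open>(\<gamma>,\<delta>) \<circ> S\<^sub>i\<close>.
\<close>

lemma det_permute_rows_one_based:
  fixes f :: "nat \<Rightarrow> nat \<Rightarrow> 'a::comm_ring_1"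
  assumes \<rho>: "\<rho> permutes {1..k}"
  shows "det (mat k k (\<lambda>(r, c). f (\<rho> (Suc r)) c))
    = of_int (sign \<rho>) * det (mat k k (\<lambda>(r, c). f (Suc r) c))"
proof -
  define p where "p = map_permutation {1..k} (\<lambda>i. i - 1) \<rho>"
  have inj: "inj_on (\<lambda>i::nat. i - 1) {1..k}"
    by (auto simp: inj_on_def)
  have "bij_betw (\<lambda>i::nat. i - 1) {1..k} {0..<k}"
    by (rule bij_betw_byWitness[where f' = Suc]) auto
  then have p: "p permutes {0..<k}"
    unfolding p_def using \<rho> by (rule map_permutation_permutes)
  have sign_p: "sign p = sign \<rho>"
    unfolding p_def using inj \<rho> by (simp add: sign_map_permutation)
  have "Suc (p r) = \<rho> (Suc r)" if "r < k" for r
  proof -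
    have "\<rho> (Suc r) \<in> {1..k}"
      using permutes_in_image[OF \<rho>] that by simp
    then show ?thesis
      using map_permutation_apply[OF inj, of "Suc r" \<rho>] that by (simp add: p_def)
  qed
  then have "mat k k (\<lambda>(r, c). mat k k (\<lambda>(r, c). f (Suc r) c) $$ (p r, c))
      = mat k k (\<lambda>(r, c). f (\<rho> (Suc r)) c)"
    using permutes_in_image[OF p] by (intro eq_matI) auto
  then show ?thesis
    using det_permute_rows[OF _ p, of "mat k k (\<lambda>(r, c). f (Suc r) c)"] sign_p by simp
qed

lemma zhat_permute_rows:
  assumes "\<rho> permutes {1..k}"
  shows "zhat d x (h \<circ> \<rho>) k = zhat d x h k"
  using det_permute_rows_one_based[OF assms, of "\<lambda>a c. xhat d x (h a) (Suc c)"]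
    det_permute_rows_one_based[OF assms, of "\<lambda>a c. if c = 0 then 1 else xhat d x (h a) c"]
  unfolding zhat_def Xhat_def Yhat_def o_def Suc_eq_plus1 by simp

text \<open>In one-line notation \<open>(1, \<dots>, r, r+2, \<dots>, n+1, r+1)\<close>: precomposing a row selection
  \<open>g\<close> with it moves row \<open>r+1\<close> to the end.\<close>

definition cycle_to_end :: "nat \<Rightarrow> nat \<Rightarrow> nat \<Rightarrow> nat" where
  "cycle_to_end n r a =
     (if a \<le> r then a else if a \<le> n then Suc a else if a = Suc n then Suc r else a)"

lemma cycle_to_end_step:
  "r < n \<Longrightarrow>
    cycle_to_end n r = Transposition.transpose (Suc r) (Suc (Suc r)) \<circ> cycle_to_end n (Suc r)"
  by (auto simp: cycle_to_end_def fun_eq_iff Transposition.transpose_def)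

lemma cycle_to_end_permutes_sign:
  assumes "r \<le> n"
  shows "cycle_to_end n r permutes {1..Suc n} \<and> sign (cycle_to_end n r) = (-1) ^ (n + r)"
  using assms
proof (induction r rule: inc_induct)
  case base
  have "cycle_to_end n n = id"
    by (auto simp: cycle_to_end_def fun_eq_iff)
  then show ?case
    by (simp only: permutes_id sign_id) (simp flip: mult_2)
next
  case (step r)
  let ?t = "Transposition.transpose (Suc r) (Suc (Suc r))"
  have t: "?t permutes {1..Suc n}"
    using step.hyps by (intro permutes_swap_id) auto
  show ?case
    unfolding cycle_to_end_step[OF step.hyps(2)]
  proof
    show "?t \<circ> cycle_to_end n (Suc r) permutes {1..Suc n}"
      using permutes_compose[OF conjunct1[OF step.IH] t] .
    have "sign (?t \<circ> cycle_to_end n (Suc r)) = sign ?t * sign (cycle_to_end n (Suc r))"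
      using t step.IH by (intro sign_compose) (auto intro: permutes_imp_permutation)
    then show "sign (?t \<circ> cycle_to_end n (Suc r)) = (-1) ^ (n + r)"
      using step.IH by (simp add: sign_swap_id)
  qed
qed

lemma cycle_to_end_permutes: "r \<le> n \<Longrightarrow> cycle_to_end n r permutes {1..Suc n}"
  using cycle_to_end_permutes_sign by blast

lemma sign_cycle_to_end: "r \<le> n \<Longrightarrow> sign (cycle_to_end n r) = (-1) ^ (n + r)"
  using cycle_to_end_permutes_sign by blast

lemma det_Yhat_first_column_expansion:
  "det (Yhat d x g (Suc n)) = (\<Sum>r<Suc n. (-1) ^ r * det (Xhat d x (g \<circ> cycle_to_end n r) n))"
proof -
  have "mat_delete (Yhat d x g (Suc n)) r 0 = Xhat d x (g \<circ> cycle_to_end n r) n" for r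
    by (rule eq_matI) (auto simp: mat_delete_def Yhat_def Xhat_def cycle_to_end_def)
  then show ?thesis
    by (subst laplace_expansion_column[of _ "Suc n" 0]) (auto simp: Yhat_def cofactor_def intro!: sum.cong)
qed

lemma sum_permutes_Suc:
  "(\<Sum>\<sigma> | \<sigma> permutes {1..Suc n}. f \<sigma>) = (\<Sum>r\<le>n. \<Sum>\<rho> | \<rho> permutes {1..n}. f (cycle_to_end n r \<circ> \<rho>))"
proof -
  let ?g = "\<lambda>(r, \<rho>). cycle_to_end n r \<circ> \<rho>"
  let ?A = "{..n} \<times> {\<rho>. \<rho> permutes {1..n}}"
  let ?B = "{\<sigma>. \<sigma> permutes {1..Suc n}}"
  have inj: "inj_on ?g ?A"
  proof (rule inj_onI)
    fix p p'
    assume "p \<in> ?A" "p' \<in> ?A" and eq: "?g p = ?g p'"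
    then obtain r \<rho> r' \<rho>' where p: "p = (r, \<rho>)" "p' = (r', \<rho>')" and r: "r \<le> n" "r' \<le> n"
      and \<rho>: "\<rho> permutes {1..n}" "\<rho>' permutes {1..n}"
      by auto
    then have eq: "cycle_to_end n r \<circ> \<rho> = cycle_to_end n r' \<circ> \<rho>'"
      using eq by simp
    have "\<rho> (Suc n) = Suc n" "\<rho>' (Suc n) = Suc n"
      using \<rho> by (auto intro: permutes_not_in)
    then have "r = r'"
      using fun_cong[OF eq, of "Suc n"] r by (simp add: cycle_to_end_def)
    then show "p = p'"
      using eq p permutes_inj[OF cycle_to_end_permutes[OF r(1)]] by (auto simp: fun_eq_iff inj_eq)
  qed
  have "?g ` ?A \<subseteq> ?B"
    using cycle_to_end_permutes by (auto intro!: permutes_compose elim: permutes_subset)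
  moreover have "card (?g ` ?A) = card ?B"
    by (subst card_image[OF inj]) (simp add: card_cartesian_product card_permutations)
  ultimately have "?g ` ?A = ?B"
    by (intro card_subset_eq) (simp_all add: finite_permutations)
  then have "bij_betw ?g ?A ?B"
    using inj by (simp add: bij_betw_def)
  then show ?thesis
    by (simp add: sum.reindex_bij_betw[symmetric] sum.cartesian_product split_def)
qed

definition Yhat_nonsingular :: "nat \<Rightarrow> (nat \<Rightarrow> nat \<Rightarrow> real) \<Rightarrow> bool" where
  "Yhat_nonsingular d x \<longleftrightarrow>
     (\<forall>h j. inj_on h {1..j} \<longrightarrow> h ` {1..j} \<subseteq> {1..d} \<longrightarrow> det (Yhat d x h j) \<noteq> 0)"

lemma triangular_number_Suc: "Suc n * (Suc n - 1) div 2 = n * (n - 1) div 2 + n"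
  by (cases n) (simp_all add: algebra_simps)

lemma signed_sum_zhat_cycle_to_end:
  assumes r: "r \<le> n"
  defines "\<kappa> \<equiv> cycle_to_end n r"
  shows "(\<Sum>\<rho> | \<rho> permutes {1..n}.
            of_int (sign (\<kappa> \<circ> \<rho>)) * (\<Prod>j=1..Suc n. zhat d x (g \<circ> (\<kappa> \<circ> \<rho>)) j))
    = (-1) ^ (n + r) * zhat d x g (Suc n)
      * (\<Sum>\<rho> | \<rho> permutes {1..n}. of_int (sign \<rho>) * (\<Prod>j=1..n. zhat d x (g \<circ> \<kappa> \<circ> \<rho>) j))"
proof -
  have \<kappa>: "\<kappa> permutes {1..Suc n}"
    unfolding \<kappa>_def using r by (rule cycle_to_end_permutes)
  have "of_int (sign (\<kappa> \<circ> \<rho>)) * (\<Prod>j=1..Suc n. zhat d x (g \<circ> (\<kappa> \<circ> \<rho>)) j)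
      = (-1) ^ (n + r) * zhat d x g (Suc n)
        * (of_int (sign \<rho>) * (\<Prod>j=1..n. zhat d x (g \<circ> \<kappa> \<circ> \<rho>) j))"
    if \<rho>: "\<rho> permutes {1..n}" for \<rho>
  proof -
    have \<rho>': "\<rho> permutes {1..Suc n}"
      using \<rho> by (rule permutes_subset) auto
    have "sign (\<kappa> \<circ> \<rho>) = sign \<kappa> * sign \<rho>"
      using \<kappa> \<rho>' by (intro sign_compose) (auto intro: permutes_imp_permutation)
    moreover have "zhat d x (g \<circ> (\<kappa> \<circ> \<rho>)) (Suc n) = zhat d x g (Suc n)"
      using zhat_permute_rows permutes_compose[OF \<rho>' \<kappa>] by blast
    ultimately show ?thesis
      by (simp add: \<kappa>_def sign_cycle_to_end[OF r] o_assoc)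
  qed
  then show ?thesis
    unfolding sum_distrib_left by (intro sum.cong) auto
qed

lemma signed_sum_zhat_eq_det_Xhat:
  assumes nonsingular: "Yhat_nonsingular d x"
    and "inj_on g {1..n}" "g ` {1..n} \<subseteq> {1..d}"
  shows "(\<Sum>\<tau> | \<tau> permutes {1..n}. of_int (sign \<tau>) * (\<Prod>j=1..n. zhat d x (g \<circ> \<tau>) j))
    = (-1) ^ (n * (n - 1) div 2) * det (Xhat d x g n)"
  using assms(2,3)
proof (induction n arbitrary: g)
  case 0
  have "Xhat d x g 0 = 1\<^sub>m 0"
    by (rule eq_matI) (auto simp: Xhat_def)
  then show ?case
    by simp
next
  case (Suc n)
  let ?c = "(-1) ^ (n * (n - 1) div 2) :: real"
  let ?z = "zhat d x g (Suc n)"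
  have IH: "(\<Sum>\<rho> | \<rho> permutes {1..n}.
        of_int (sign \<rho>) * (\<Prod>j=1..n. zhat d x (g \<circ> cycle_to_end n r \<circ> \<rho>) j))
      = ?c * det (Xhat d x (g \<circ> cycle_to_end n r) n)" if r: "r \<le> n" for r
  proof (rule Suc.IH)
    have \<kappa>_image: "cycle_to_end n r ` {1..n} \<subseteq> {1..Suc n}"
      by (auto simp: cycle_to_end_def)
    then show "inj_on (g \<circ> cycle_to_end n r) {1..n}"
      using permutes_inj_on[OF cycle_to_end_permutes[OF r]] Suc.prems(1)
      by (auto intro: comp_inj_on inj_on_subset)
    show "(g \<circ> cycle_to_end n r) ` {1..n} \<subseteq> {1..d}"
      using \<kappa>_image Suc.prems(2) by (auto simp: image_subset_iff)
  qed
  have "(\<Sum>\<tau> | \<tau> permutes {1..Suc n}. of_int (sign \<tau>) * (\<Prod>j=1..Suc n. zhat d x (g \<circ> \<tau>) j))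
      = (\<Sum>r\<le>n. (-1) ^ (n + r) * ?z * (?c * det (Xhat d x (g \<circ> cycle_to_end n r) n)))"
    unfolding sum_permutes_Suc
    by (intro sum.cong refl) (simp only: atMost_iff signed_sum_zhat_cycle_to_end IH)
  also have "\<dots> = (-1) ^ n * ?c * (?z * det (Yhat d x g (Suc n)))"
    by (simp add: det_Yhat_first_column_expansion lessThan_Suc_atMost power_add sum_distrib_left
        algebra_simps)
  also have "?z * det (Yhat d x g (Suc n)) = det (Xhat d x g (Suc n))"
    using nonsingular Suc.prems by (simp add: Yhat_nonsingular_def zhat_def)
  finally show ?case
    unfolding triangular_number_Suc power_add by (simp only: mult_ac)
qed

text \<open>Row \<open>a\<close> holds homogeneous coordinates of \<open>p a - b\<close> in coordinates \<open>1..j-1\<close>, so the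
  determinant vanishes iff these points are affinely dependent.\<close>

definition affine_mat :: "nat \<Rightarrow> (nat \<Rightarrow> nat \<Rightarrow> real) \<Rightarrow> (nat \<Rightarrow> real) \<Rightarrow> real mat" where
  "affine_mat j p b = mat j j (\<lambda>(a, m). if m = 0 then 1 else p a m - b m)"

lemma Yhat_eq_affine_mat: "Yhat d x h j = affine_mat j (\<lambda>r. x (h (Suc r))) (x (d + 1))"
  by (rule eq_matI) (auto simp: Yhat_def affine_mat_def xhat_def)

lemma affine_mat_affine_combination:
  assumes coords: "\<And>a m. a < j \<Longrightarrow> 1 \<le> m \<Longrightarrow> m < j \<Longrightarrow> q a m = (\<Sum>r=0..<j. w a r * p r m)"
    and weights: "\<And>a. a < j \<Longrightarrow> (\<Sum>r=0..<j. w a r) = 1"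
  shows "affine_mat j q b = mat j j (\<lambda>(a, r). w a r) * affine_mat j p b"
proof (rule eq_matI)
  fix a m
  assume "a < dim_row (mat j j (\<lambda>(a, r). w a r) * affine_mat j p b)"
    and "m < dim_col (mat j j (\<lambda>(a, r). w a r) * affine_mat j p b)"
  then have am: "a < j" "m < j"
    by (simp_all add: affine_mat_def)
  have "(mat j j (\<lambda>(a, r). w a r) * affine_mat j p b) $$ (a, m)
      = (\<Sum>r=0..<j. w a r * (if m = 0 then 1 else p r m - b m))"
    using am by (auto simp: affine_mat_def scalar_prod_def intro!: sum.cong)
  also have "\<dots> = (if m = 0 then 1 else q a m - b m)"
    using am coords[of a m] weights[of a]
    by (simp add: right_diff_distrib sum_subtractf flip: sum_distrib_right)
  finally show "affine_mat j q b $$ (a, m) = (mat j j (\<lambda>(a, r). w a r) * affine_mat j p b) $$ (a, m)"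
    using am by (simp add: affine_mat_def)
qed (simp_all add: affine_mat_def)

lemma affine_dependence_of_singular_affine_mat:
  assumes "det (affine_mat j p b) = 0"
  obtains v where "\<exists>a<j. v a \<noteq> 0" "(\<Sum>a=0..<j. v a) = 0"
    "\<And>m. 1 \<le> m \<Longrightarrow> m < j \<Longrightarrow> (\<Sum>a=0..<j. v a * p a m) = 0"
proof -
  let ?A = "affine_mat j p b"
  have A: "?A \<in> carrier_mat j j"
    by (simp add: affine_mat_def)
  then have "det (transpose_mat ?A) = 0"
    using assms by (simp add: det_transpose)
  then obtain v where v: "v \<in> carrier_vec j" "v \<noteq> 0\<^sub>v j" "transpose_mat ?A *\<^sub>v v = 0\<^sub>v j"
    using det_0_iff_vec_prod_zero_field[of "transpose_mat ?A" j] A by auto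
  have column: "(\<Sum>a=0..<j. v $ a * (if m = 0 then 1 else p a m - b m)) = 0" if "m < j" for m
    using arg_cong[OF v(3), of "\<lambda>u. u $ m"] v(1) that
    by (simp add: affine_mat_def scalar_prod_def mult.commute)
  have nonzero: "\<exists>a<j. v $ a \<noteq> 0"
    using v(1,2) by (auto intro: eq_vecI)
  then have sum: "(\<Sum>a=0..<j. v $ a) = 0"
    using column[of 0] by auto
  show thesis
  proof (rule that[of "\<lambda>a. v $ a"])
    show "(\<Sum>a=0..<j. v $ a * p a m) = 0" if "1 \<le> m" "m < j" for m
      using column[OF that(2)] sum that
      by (simp add: right_diff_distrib sum_subtractf flip: sum_distrib_right)
  qed (use nonzero sum in auto)
qed

lemma aff_indep_imp_det_affine_mat_nonzero:
  assumes indep: "aff_indep C" and e: "bij_betw e {0..<j} C"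
    and support: "\<And>a m. a < j \<Longrightarrow> m = 0 \<or> j \<le> m \<Longrightarrow> e a m = 0"
  shows "det (affine_mat j e b) \<noteq> 0"
proof
  assume "det (affine_mat j e b) = 0"
  then obtain v where nonzero: "\<exists>a<j. v a \<noteq> 0" and sum: "(\<Sum>a=0..<j. v a) = 0"
    and coords: "\<And>m. 1 \<le> m \<Longrightarrow> m < j \<Longrightarrow> (\<Sum>a=0..<j. v a * e a m) = 0"
    by (rule affine_dependence_of_singular_affine_mat) blast
  define u where "u = v \<circ> the_inv_into {0..<j} e"
  have reindex: "(\<Sum>p\<in>C. f p) = (\<Sum>a=0..<j. f (e a))" for f :: "(nat \<Rightarrow> real) \<Rightarrow> real"
    by (rule sum.reindex_bij_betw[OF e, symmetric])
  have u: "u (e a) = v a" if "a < j" for a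
    using the_inv_into_f_f[OF bij_betw_imp_inj_on[OF e]] that by (simp add: u_def)
  have "(\<Sum>a=0..<j. v a * e a m) = 0" for m
    using coords[of m] support[of _ m] by (cases "m = 0 \<or> j \<le> m") auto
  then have "(\<Sum>p\<in>C. u p) = 0" "(\<lambda>m. \<Sum>p\<in>C. u p * p m) = (\<lambda>m. 0)"
    using sum by (simp_all add: reindex u)
  then have "u (e a) = 0" if "a < j" for a
    using indep e that unfolding aff_indep_def by (auto simp: bij_betw_def)
  then show False
    using nonzero u by auto
qed

lemma aff_indep_finite: "aff_indep C \<Longrightarrow> finite C"
  by (simp add: aff_indep_def)

lemma subset_convhull:
  assumes "finite C"
  shows "C \<subseteq> convhull C"
proof
  fix c
  assume "c \<in> C"
  then have "C \<inter> {p. p = c} = {c}"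
    by auto
  then show "c \<in> convhull C"
    unfolding convhull_def using assms by (auto intro!: exI[of _ "\<lambda>p. of_bool (p = c)"])
qed

lemma convhull_image_combination:
  assumes "y \<in> convhull (q ` A)" "inj_on q A"
  obtains w where "(\<Sum>a\<in>A. w a) = 1" "y = (\<lambda>c. \<Sum>a\<in>A. w a * q a c)"
proof -
  obtain u where "(\<Sum>p\<in>q ` A. u p) = 1" "y = (\<lambda>c. \<Sum>p\<in>q ` A. u p * p c)"
    using assms(1) unfolding convhull_def by blast
  then show thesis
    using that[of "u \<circ> q"] by (simp add: sum.reindex[OF assms(2)])
qed

lemma det_Yhat_nonzero_of_projected_simplex:
  fixes d :: nat and x :: "nat \<Rightarrow> nat \<Rightarrow> real" and h :: "nat \<Rightarrow> nat"
  defines q_def: "q \<equiv> \<lambda>r. point d x (h (Suc r))"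
  assumes "0 < j" "j \<le> d" and q_inj: "inj_on q {0..<j}"
    and simplex: "is_simplex (j - 1) (proj d (d - (j - 1)) ` convhull (q ` {0..<j}))"
  shows "det (Yhat d x h j) \<noteq> 0"
proof -
  obtain C where indep: "aff_indep C" and card_C: "card C = j - 1 + 1"
    and C: "proj d (d - (j - 1)) ` convhull (q ` {0..<j}) = convhull C"
    using simplex unfolding is_simplex_def by blast
  obtain e where "bij_betw e {0..<card C} C"
    using ex_bij_betw_nat_finite[OF aff_indep_finite[OF indep]] ..
  then have e: "bij_betw e {0..<j} C"
    using card_C \<open>0 < j\<close> by simp
  have "\<forall>a\<in>{0..<j}. \<exists>w. (\<Sum>r=0..<j. w r) = 1
      \<and> e a = proj d (d - (j - 1)) (\<lambda>c. \<Sum>r=0..<j. w r * q r c)"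
  proof
    fix a
    assume "a \<in> {0..<j}"
    then have "e a \<in> convhull C"
      using subset_convhull[OF aff_indep_finite[OF indep]] bij_betwE[OF e] by blast
    then obtain y where y: "y \<in> convhull (q ` {0..<j})" and e_a: "e a = proj d (d - (j - 1)) y"
      using C by blast
    obtain w where "(\<Sum>r=0..<j. w r) = 1" "y = (\<lambda>c. \<Sum>r=0..<j. w r * q r c)"
      using y q_inj by (rule convhull_image_combination)
    then show "\<exists>w. (\<Sum>r=0..<j. w r) = 1
        \<and> e a = proj d (d - (j - 1)) (\<lambda>c. \<Sum>r=0..<j. w r * q r c)"
      using e_a by blast
  qed
  from bchoice[OF this] obtain w where w: "\<forall>a\<in>{0..<j}. (\<Sum>r=0..<j. w a r) = 1
      \<and> e a = proj d (d - (j - 1)) (\<lambda>c. \<Sum>r=0..<j. w a r * q r c)" ..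
  have e_coord: "e a m = (if m \<le> j - 1 then \<Sum>r=0..<j. w a r * q r m else 0)" if "a < j" for a m
    using w that \<open>j \<le> d\<close> by (simp add: proj_def)
  have q_coord: "q r m = (if 1 \<le> m \<and> m \<le> d then x (h (Suc r)) m else 0)" for r m
    by (simp add: q_def point_def)
  have "affine_mat j e (x (d + 1)) = mat j j (\<lambda>(a, r). w a r) * Yhat d x h j"
    unfolding Yhat_eq_affine_mat
  proof (rule affine_mat_affine_combination)
    show "e a m = (\<Sum>r=0..<j. w a r * x (h (Suc r)) m)" if "a < j" "1 \<le> m" "m < j" for a m
      using that \<open>j \<le> d\<close> by (simp add: e_coord q_coord)
    show "(\<Sum>r=0..<j. w a r) = 1" if "a < j" for a
      using w that by simp
  qed
  moreover have "det (affine_mat j e (x (d + 1))) \<noteq> 0"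
    using indep e by (rule aff_indep_imp_det_affine_mat_nonzero) (auto simp: e_coord q_coord)
  ultimately show ?thesis
    using det_mult[of "mat j j (\<lambda>(a, r). w a r)" j "Yhat d x h j"] by (simp add: Yhat_def)
qed

lemma general_position_imp_Yhat_nonsingular:
  assumes gp: "general_position d x" and distinct: "inj_on (point d x) {1..d+1}"
  shows "Yhat_nonsingular d x"
  unfolding Yhat_nonsingular_def
proof (intro allI impI)
  fix h :: "nat \<Rightarrow> nat" and j :: nat
  assume h: "inj_on h {1..j}" "h ` {1..j} \<subseteq> {1..d}"
  show "det (Yhat d x h j) \<noteq> 0"
  proof (cases "j = 0")
    case True
    then have "Yhat d x h j = 1\<^sub>m 0"
      by (intro eq_matI) (auto simp: Yhat_def)
    then show ?thesis
      by simp
  next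
    case False
    have "j \<le> d"
      using card_inj_on_le[OF h] by simp
    let ?q = "\<lambda>r. point d x (h (Suc r))"
    have "{1..j} = Suc ` {0..<j}"
      by (simp add: image_Suc_atLeastLessThan atLeastLessThanSuc_atLeastAtMost)
    then have points: "point d x ` h ` {1..j} = ?q ` {0..<j}"
      by (simp only: image_image)
    have "inj_on ?q {0..<j}"
    proof (rule inj_onI)
      fix a b
      assume ab: "a \<in> {0..<j}" "b \<in> {0..<j}" and "?q a = ?q b"
      moreover have "Suc a \<in> {1..j}" "Suc b \<in> {1..j}"
        using ab by auto
      then have "h (Suc a) \<in> {1..d}" "h (Suc b) \<in> {1..d}"
        using h(2) by blast+
      ultimately have "h (Suc a) = h (Suc b)"
        by (intro inj_onD[OF distinct]) auto
      then show "a = b"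
        using inj_onD[OF h(1), of "Suc a" "Suc b"] ab by simp
    qed
    moreover have "h ` {1..j} \<subseteq> {1..d+1}" "card (h ` {1..j}) = j - 1 + 1" "j - 1 \<le> d - 1"
      using h False \<open>j \<le> d\<close> by (auto simp: card_image)
    then have "is_simplex (j - 1) (proj d (d - (j - 1)) ` convhull (?q ` {0..<j}))"
      using gp unfolding general_position_def points[symmetric] by blast
    ultimately show ?thesis
      using False \<open>j \<le> d\<close> by (intro det_Yhat_nonzero_of_projected_simplex) auto
  qed
qed

lemma concat_perm_permutes:
  assumes partition: "\<Gamma> \<union> \<Delta> = {1..d}" "\<Gamma> \<inter> \<Delta> = {}"
    and \<gamma>: "bij_betw \<gamma> {1..i} \<Gamma>" and \<delta>: "bij_betw \<delta> {1..d-i} \<Delta>" and "i \<le> d"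
  shows "concat_perm d i \<gamma> \<delta> permutes {1..d}"
proof (rule bij_imp_permutes)
  let ?c = "concat_perm d i \<gamma> \<delta>"
  have "bij_betw ?c {1..i} \<Gamma>"
    using \<gamma> by (rule bij_betw_cong[THEN iffD1, rotated]) (simp add: concat_perm_def)
  moreover have "bij_betw ?c {i<..d} \<Delta>"
  proof -
    have "bij_betw (\<lambda>j. j - i) {i<..d} {1..d-i}"
      by (rule bij_betw_byWitness[where f' = "\<lambda>j. j + i"]) auto
    then have "bij_betw (\<delta> \<circ> (\<lambda>j. j - i)) {i<..d} \<Delta>"
      using \<delta> by (rule bij_betw_trans)
    then show ?thesis
      by (rule bij_betw_cong[THEN iffD1, rotated]) (simp add: concat_perm_def)
  qed
  ultimately have "bij_betw ?c ({1..i} \<union> {i<..d}) (\<Gamma> \<union> \<Delta>)"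
    using partition(2) by (rule bij_betw_combine)
  moreover have "{1..i} \<union> {i<..d} = {1..d}"
    using \<open>i \<le> d\<close> by auto
  ultimately show "bij_betw ?c {1..d} {1..d}"
    using partition(1) by simp
  show "?c j = j" if "j \<notin> {1..d}" for j
    using that \<open>i \<le> d\<close> by (auto simp: concat_perm_def)
qed

lemma bij_betw_compose_perms_delta:
  assumes c: "c permutes {1..d}" and tail: "\<And>j. i < j \<Longrightarrow> j \<le> d \<Longrightarrow> c j = \<delta> (j - i)"
    and "i \<le> d"
  shows "bij_betw ((\<circ>) c) {\<rho>. \<rho> permutes {1..i}} (perms_delta d i \<delta>)"
proof (rule bij_betw_byWitness[where f' = "\<lambda>\<sigma>. Hilbert_Choice.inv c \<circ> \<sigma>"])
  show "\<forall>\<rho>\<in>{\<rho>. \<rho> permutes {1..i}}. Hilbert_Choice.inv c \<circ> (c \<circ> \<rho>) = \<rho>"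
    using permutes_inv_o(2)[OF c] by (simp add: o_assoc)
  show "\<forall>\<sigma>\<in>perms_delta d i \<delta>. c \<circ> (Hilbert_Choice.inv c \<circ> \<sigma>) = \<sigma>"
    using permutes_inv_o(1)[OF c] by (simp add: o_assoc)
  show "(\<circ>) c ` {\<rho>. \<rho> permutes {1..i}} \<subseteq> perms_delta d i \<delta>"
  proof clarify
    fix \<rho>
    assume \<rho>: "\<rho> permutes {1..i}"
    have "\<rho> permutes {1..d}"
      by (rule permutes_subset[OF \<rho>]) (use \<open>i \<le> d\<close> in auto)
    then show "c \<circ> \<rho> \<in> perms_delta d i \<delta>"
      using c tail permutes_not_in[OF \<rho>] by (auto simp: perms_delta_def intro: permutes_compose)
  qed
  show "(\<lambda>\<sigma>. Hilbert_Choice.inv c \<circ> \<sigma>) ` perms_delta d i \<delta> \<subseteq> {\<rho>. \<rho> permutes {1..i}}"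
  proof clarify
    fix \<sigma>
    assume "\<sigma> \<in> perms_delta d i \<delta>"
    then have \<sigma>: "\<sigma> permutes {1..d}" and \<sigma>_tail: "\<And>j. i < j \<Longrightarrow> j \<le> d \<Longrightarrow> \<sigma> j = c j"
      by (auto simp: perms_delta_def tail)
    have \<rho>: "Hilbert_Choice.inv c \<circ> \<sigma> permutes {1..d}"
      using \<sigma> permutes_inv[OF c] by (rule permutes_compose)
    have "(Hilbert_Choice.inv c \<circ> \<sigma>) j = j" if "j \<notin> {1..i}" for j
    proof (cases "j \<in> {1..d}")
      case True
      then show ?thesis
        using that \<sigma>_tail permutes_inverses(2)[OF c] by auto
    next
      case False
      then show ?thesis
        using permutes_not_in[OF \<rho>] by blast
    qed
    then show "Hilbert_Choice.inv c \<circ> \<sigma> permutes {1..i}"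
      using \<rho> unfolding permutes_def by blast
  qed
qed

lemma signed_sum_zhat_perms_delta:
  assumes nonsingular: "Yhat_nonsingular d x" and c: "c permutes {1..d}"
    and tail: "\<And>j. i < j \<Longrightarrow> j \<le> d \<Longrightarrow> c j = \<delta> (j - i)" and "i \<le> d"
  shows "(\<Sum>\<sigma>\<in>perms_delta d i \<delta>. of_int (sign \<sigma>) * (\<Prod>j=1..i. zhat d x \<sigma> j))
    = (-1) ^ (i * (i - 1) div 2) * of_int (sign c) * det (Xhat d x c i)"
proof -
  have "inj_on c {1..i}" "c ` {1..i} \<subseteq> {1..d}"
    using permutes_inj_on[OF c] permutes_image[OF c] \<open>i \<le> d\<close> by (auto intro: inj_on_subset)
  note sum_c = signed_sum_zhat_eq_det_Xhat[OF nonsingular this]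
  have sign_c: "sign (c \<circ> \<rho>) = sign c * sign \<rho>" if "\<rho> permutes {1..i}" for \<rho>
    using c that by (intro sign_compose) (auto intro: permutes_imp_permutation)
  let ?F = "\<lambda>\<sigma>. of_int (sign \<sigma>) * (\<Prod>j=1..i. zhat d x \<sigma> j) :: real"
  have "(\<Sum>\<sigma>\<in>perms_delta d i \<delta>. ?F \<sigma>) = (\<Sum>\<rho> | \<rho> permutes {1..i}. ?F (c \<circ> \<rho>))"
    by (rule sum.reindex_bij_betw[OF bij_betw_compose_perms_delta[OF c tail \<open>i \<le> d\<close>], symmetric])
  also have "\<dots> = of_int (sign c)
      * (\<Sum>\<rho> | \<rho> permutes {1..i}. of_int (sign \<rho>) * (\<Prod>j=1..i. zhat d x (c \<circ> \<rho>) j))"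
    unfolding sum_distrib_left by (intro sum.cong) (auto simp: sign_c)
  finally show ?thesis
    using sum_c by simp
qed

theorem mainTheorem17:
  fixes d i :: nat and x :: "nat \<Rightarrow> nat \<Rightarrow> real"
    and \<Gamma> \<Delta> :: "nat set" and \<gamma> \<delta> :: "nat \<Rightarrow> nat"
  assumes simplex: "is_simplex d (convhull (point d x ` {1..d+1}))"
    and distinct_vertices: "inj_on (point d x) {1..d+1}"
    and gp: "general_position d x"
    and i_range: "1 \<le> i" "i \<le> d"
    and partition: "\<Gamma> \<union> \<Delta> = {1..d}" "\<Gamma> \<inter> \<Delta> = {}" "card \<Gamma> = i"
    and gamma: "bij_betw \<gamma> {1..i} \<Gamma>"
    and delta: "bij_betw \<delta> {1..d-i} \<Delta>"
  shows "(\<Sum>\<sigma>\<in>perms_delta d i \<delta>. of_int (sign \<sigma>) * (\<Prod>j=1..i. zhat d x \<sigma> j))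
           = (-1) ^ (i * (i - 1) div 2) * of_int (sign (concat_perm d i \<gamma> \<delta>))
             * det (Xhat d x (concat_perm d i \<gamma> \<delta>) i)
      \<and> (\<Sum>\<sigma> | \<sigma> permutes {1..d}. of_int (sign \<sigma>) * (\<Prod>j=1..d. zhat d x \<sigma> j))
           = (-1) ^ (d * (d - 1) div 2) * det (Xhat d x id d)"
proof
  have nonsingular: "Yhat_nonsingular d x"
    using gp distinct_vertices by (rule general_position_imp_Yhat_nonsingular)
  have "concat_perm d i \<gamma> \<delta> permutes {1..d}"
    using partition(1,2) gamma delta i_range(2) by (rule concat_perm_permutes)
  moreover have "concat_perm d i \<gamma> \<delta> j = \<delta> (j - i)" if "i < j" "j \<le> d" for j
    using that by (simp add: concat_perm_def)
  ultimately show "(\<Sum>\<sigma>\<in>perms_delta d i \<delta>. of_int (sign \<sigma>) * (\<Prod>j=1..i. zhat d x \<sigma> j))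
      = (-1) ^ (i * (i - 1) div 2) * of_int (sign (concat_perm d i \<gamma> \<delta>))
        * det (Xhat d x (concat_perm d i \<gamma> \<delta>) i)"
    using i_range(2) by (rule signed_sum_zhat_perms_delta[OF nonsingular])
  show "(\<Sum>\<sigma> | \<sigma> permutes {1..d}. of_int (sign \<sigma>) * (\<Prod>j=1..d. zhat d x \<sigma> j))
      = (-1) ^ (d * (d - 1) div 2) * det (Xhat d x id d)"
    using signed_sum_zhat_eq_det_Xhat[OF nonsingular, of id d] by simp
qed

end
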